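(* Let $\mathbf H\in\mathbb R^{m\times d}$, $\mathbf y\in\mathbb R^m$, $\mathbf w_1,\ldots,\mathbf w_p\in\mathbb R^d$, and let $\psi_i\colon\mathbb R\to\mathbb R$, $i=1,\ldots,p$, be convex functions. If $\operatorname{argmin}_{t\in\mathbb R}\psi_i(t)\neq\emptyset$ for all $i=1,\ldots,p$, then $$\operatorname*{argmin}_{\mathbf x\in\mathbb R^d}\ \frac12\|\mathbf H\mathbf x-\mathbf y\|_2^2+\sum_{i=1}^p\psi_i(\mathbf w_i^T\mathbf x)\neq\emptyset .$$ *)

theory Defs
  imports "HOL-Analysis.Analysis"
begin

end

(*
  The quadratic term is itself a sum of ridge functions t \<mapsto> (t - y_k)^2 / 2 of the rows of H,
  so it suffices that a finite sum F(x) = \<Sum>i. \<phi>_i (w_i \<bullet> x) of convex ridge functions, each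
  attaining its minimum, attains its minimum. F is invariant under the common kernel N of the
  w_i, so only the orthogonal complement of N matters. If the sublevel set {F \<le> F 0} is bounded
  there, compactness gives a minimizer. Otherwise it contains a ray t v (t \<ge> 0) with v \<noteq> 0
  orthogonal to N. Each \<phi>_i with w_i \<bullet> v \<noteq> 0 is then bounded above on a half-line, and a convex
  function of one variable bounded above on a half-line is nonincreasing in that direction,
  so \<phi>_i stays at its minimum beyond a minimizer. By induction the sum over the indices with
  w_i \<bullet> v = 0 has a minimizer x0, and x0 + s v for large s minimizes F.
*)

theory Submission
  imports Defs
begin

lemma convex_on_ridge:
  fixes w :: "'a::real_inner"
  assumes "convex_on UNIV \<phi>"
  shows "convex_on UNIV (\<lambda>x. \<phi> (w \<bullet> x))"
proof (rule convex_onI)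
  fix t :: real and x z :: 'a
  assume "0 < t" "t < 1"
  then show "\<phi> (w \<bullet> ((1 - t) *\<^sub>R x + t *\<^sub>R z)) \<le> (1 - t) * \<phi> (w \<bullet> x) + t * \<phi> (w \<bullet> z)"
    using convex_onD[OF assms, of t "w \<bullet> x" "w \<bullet> z"] by (simp add: inner_add_right)
qed simp

lemma convex_on_sum_fun:
  assumes "convex S" and "\<And>i. i \<in> I \<Longrightarrow> convex_on S (f i)"
  shows "convex_on S (\<lambda>x. \<Sum>i\<in>I. f i x)"
  using assms(2)
proof (induction I rule: infinite_finite_induct)
  case (insert i I)
  then show ?case by (simp add: convex_on_add)
qed (use assms(1) in \<open>simp_all add: convex_on_const\<close>)

lemma convex_sublevel:
  assumes "convex_on S f"
  shows "convex {x \<in> S. f x \<le> a}"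
proof (rule convexI)
  fix x z and u v :: real
  assume x: "x \<in> {x \<in> S. f x \<le> a}" and z: "z \<in> {x \<in> S. f x \<le> a}"
    and uv: "0 \<le> u" "0 \<le> v" "u + v = 1"
  have "u *\<^sub>R x + v *\<^sub>R z \<in> S"
    using convexD[OF convex_on_imp_convex[OF assms]] x z uv by blast
  moreover have "f (u *\<^sub>R x + v *\<^sub>R z) \<le> u * f x + v * f z"
    using assms x z uv unfolding convex_on_def by blast
  moreover have "u * f x + v * f z \<le> u * a + v * a"
    using x z uv by (intro add_mono mult_left_mono) auto
  ultimately show "u *\<^sub>R x + v *\<^sub>R z \<in> {x \<in> S. f x \<le> a}"
    using uv by (simp add: distrib_right[symmetric])
qed

lemma convex_on_real_nonincreasing_if_bounded_on_ray:
  fixes f :: "real \<Rightarrow> real"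
  assumes conv: "convex_on UNIV f" and bnd: "\<And>t. t \<ge> 0 \<Longrightarrow> f (a + t * b) \<le> B"
    and "r \<ge> 0"
  shows "f (x + r * b) \<le> f x"
proof (rule ccontr)
  assume "\<not> f (x + r * b) \<le> f x"
  define d where "d = f (x + r * b) - f x"
  have d: "d > 0" using \<open>\<not> f (x + r * b) \<le> f x\<close> by (simp add: d_def)
  then have r: "r > 0" and b: "b \<noteq> 0" using \<open>r \<ge> 0\<close> by (cases "r = 0"; auto simp: d_def)+
  \<comment> \<open>\<open>k\<close> makes \<open>x + k r b\<close> a point of the bounded ray and \<open>k d\<close> exceed \<open>B - f x\<close>\<close>
  define k where "k = 1 + \<bar>(x - a) / b\<bar> / r + \<bar>B - f x\<bar> / d"
  have k: "k \<ge> 1" using d r by (simp add: k_def)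
  have "k * d = d + \<bar>(x - a) / b\<bar> / r * d + \<bar>B - f x\<bar>"
    using d by (simp add: k_def field_simps)
  moreover have "\<bar>(x - a) / b\<bar> / r * d \<ge> 0" using d r by simp
  ultimately have kd: "k * d > B - f x" using d by linarith
  have far: "f (x + (k * r) * b) \<le> B"
  proof -
    have "k * r \<ge> \<bar>(x - a) / b\<bar>"
      using d r by (simp add: k_def distrib_right)
    then have "k * r + (x - a) / b \<ge> 0" by linarith
    moreover have "a + (k * r + (x - a) / b) * b = x + (k * r) * b"
      using b by (simp add: field_simps)
    ultimately show ?thesis using bnd by metis
  qed
  have "x + r * b = (1 - 1 / k) *\<^sub>R x + (1 / k) *\<^sub>R (x + (k * r) * b)"
    using k by (simp add: field_simps)
  then have "f (x + r * b) \<le> (1 - 1 / k) * f x + (1 / k) * f (x + (k * r) * b)"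
    using convex_onD[OF conv, of "1 / k" x "x + (k * r) * b"] k by simp
  also have "\<dots> \<le> (1 - 1 / k) * f x + (1 / k) * B"
    using far k by (simp add: divide_right_mono)
  finally have "k * d \<le> B - f x"
    using k by (simp add: d_def field_simps)
  then show False using kd by linarith
qed

lemma unbounded_closed_convex_contains_ray:
  fixes K :: "'a::euclidean_space set"
  assumes "closed K" "convex K" "a \<in> K" "\<not> bounded K"
  obtains v where "v \<noteq> 0" "\<And>t. t \<ge> 0 \<Longrightarrow> a + t *\<^sub>R v \<in> K"
proof -
  have "\<forall>n::nat. \<exists>x\<in>K. norm (x - a) > real n"
    using assms(4) unfolding bounded_any_center[of K a]
    by (metis dist_norm norm_minus_commute not_le)
  then obtain x where x: "\<And>n. x n \<in> K" "\<And>n. norm (x n - a) > real n" by metis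
  define u where "u n = (x n - a) /\<^sub>R norm (x n - a)" for n
  have nx: "norm (x n - a) > 0" for n
    using x(2)[of n] by (metis of_nat_0_le_iff order_le_less_trans)
  have "u n \<in> sphere 0 1" for n unfolding u_def using nx[of n] by simp
  then obtain v r where v: "v \<in> sphere 0 1" "strict_mono r" "(u \<circ> r) \<longlonglongrightarrow> v"
    using compact_sphere[of "0::'a" 1] unfolding compact_def by metis
  have "a + t *\<^sub>R v \<in> K" if t: "t \<ge> 0" for t
  proof (rule Lim_in_closed_set[OF assms(1)])
    show "((\<lambda>n. a + t *\<^sub>R (u \<circ> r) n) \<longlongrightarrow> a + t *\<^sub>R v) sequentially"
      using v(3) by (intro tendsto_intros)
    obtain N :: nat where N: "t \<le> real N" using real_arch_simple by blast
    show "\<forall>\<^sub>F n in sequentially. a + t *\<^sub>R (u \<circ> r) n \<in> K"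
    proof (rule eventually_sequentiallyI[of N])
      fix n assume "N \<le> n"
      then have "real N \<le> real (r n)" using seq_suble[OF v(2), of n] by simp
      then have "t \<le> norm (x (r n) - a)" using N x(2)[of "r n"] by linarith
      then have m: "0 \<le> t / norm (x (r n) - a)" "t / norm (x (r n) - a) \<le> 1"
        using t nx[of "r n"] by auto
      have "(1 - t / norm (x (r n) - a)) *\<^sub>R a + (t / norm (x (r n) - a)) *\<^sub>R x (r n) \<in> K"
        using convexD_alt[OF assms(2) assms(3) x(1)] m by blast
      then show "a + t *\<^sub>R (u \<circ> r) n \<in> K"
        by (simp add: u_def algebra_simps divide_inverse)
    qed
  qed simp
  moreover have "v \<noteq> 0" using v(1) by auto
  ultimately show ?thesis using that by blast
qed

lemma continuous_attains_inf_if_bounded_sublevel: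
  fixes F :: "'a::euclidean_space \<Rightarrow> real"
  assumes "continuous_on UNIV F" "closed S" "a \<in> S" "\<And>x. \<exists>s\<in>S. F s \<le> F x"
    and "bounded (S \<inter> {x. F x \<le> F a})"
  shows "\<exists>x. \<forall>z. F x \<le> F z"
proof -
  let ?K = "S \<inter> {x. F x \<le> F a}"
  have "compact ?K"
    using assms(1,2,5) closed_Collect_le[OF assms(1) continuous_on_const]
    by (simp add: compact_eq_bounded_closed closed_Int)
  then obtain x where x: "x \<in> ?K" "\<And>z. z \<in> ?K \<Longrightarrow> F x \<le> F z"
    using continuous_attains_inf[of ?K F] assms(3) continuous_on_subset[OF assms(1)] by blast
  have "F x \<le> F z" for z
  proof -
    obtain s where "s \<in> S" "F s \<le> F z" using assms(4) by blast
    then show ?thesis using x(2)[of s] x(2)[of a] assms(3) by force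
  qed
  then show ?thesis by blast
qed

definition ridge_sum :: "('i \<Rightarrow> real \<Rightarrow> real) \<Rightarrow> ('i \<Rightarrow> 'a::real_inner) \<Rightarrow> 'i set \<Rightarrow> 'a \<Rightarrow> real"
  where "ridge_sum \<phi> w I x = (\<Sum>i\<in>I. \<phi> i (w i \<bullet> x))"

lemma convex_on_ridge_sum:
  assumes "\<And>i. i \<in> I \<Longrightarrow> convex_on UNIV (\<phi> i)"
  shows "convex_on UNIV (ridge_sum \<phi> w I)"
  unfolding ridge_sum_def[abs_def]
  using assms by (intro convex_on_sum_fun convex_on_ridge) auto

lemma ridge_sum_split:
  assumes "finite I" "I0 \<subseteq> I"
  shows "ridge_sum \<phi> w I x = ridge_sum \<phi> w I0 x + ridge_sum \<phi> w (I - I0) x"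
  using sum.subset_diff[OF assms(2,1)] by (simp add: ridge_sum_def add.commute)

lemma ridge_sum_ge_sum_min:
  assumes "\<And>i s. i \<in> I \<Longrightarrow> \<phi> i (c i) \<le> \<phi> i s"
  shows "(\<Sum>i\<in>I. \<phi> i (c i)) \<le> ridge_sum \<phi> w I x"
  unfolding ridge_sum_def using assms by (intro sum_mono) auto

lemma ridge_term_constant_on_bounded_ray:
  assumes "finite I" "i \<in> I" "convex_on UNIV (\<phi> i)"
    and min: "\<And>j s. j \<in> I \<Longrightarrow> \<phi> j (c j) \<le> \<phi> j s"
    and bnd: "\<And>t. t \<ge> 0 \<Longrightarrow> ridge_sum \<phi> w I (t *\<^sub>R v) \<le> B"
    and "r \<ge> 0"
  shows "\<phi> i (c i + r * (w i \<bullet> v)) = \<phi> i (c i)"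
proof -
  have "\<phi> i (0 + t * (w i \<bullet> v)) \<le> B - (\<Sum>j\<in>I - {i}. \<phi> j (c j))" if "t \<ge> 0" for t
  proof -
    have "ridge_sum \<phi> w I (t *\<^sub>R v) = \<phi> i (t * (w i \<bullet> v)) + ridge_sum \<phi> w (I - {i}) (t *\<^sub>R v)"
      using sum.remove[OF assms(1,2)] by (simp add: ridge_sum_def)
    then show ?thesis
      using bnd[OF that] ridge_sum_ge_sum_min[of "I - {i}" \<phi> c w "t *\<^sub>R v"] min by force
  qed
  then have "\<phi> i (c i + r * (w i \<bullet> v)) \<le> \<phi> i (c i)"
    by (rule convex_on_real_nonincreasing_if_bounded_on_ray[OF assms(3) _ \<open>r \<ge> 0\<close>])
  then show ?thesis using min[OF assms(2)] by (meson order_antisym)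
qed

lemma ridge_sum_minimizer_extend:
  assumes "finite I" "I0 \<subseteq> I"
    and min0: "\<And>z. ridge_sum \<phi> w I0 x0 \<le> ridge_sum \<phi> w I0 z"
    and min: "\<And>i s. i \<in> I \<Longrightarrow> \<phi> i (c i) \<le> \<phi> i s"
    and orth: "\<And>i. i \<in> I0 \<Longrightarrow> w i \<bullet> v = 0"
    and nonorth: "\<And>i. i \<in> I - I0 \<Longrightarrow> w i \<bullet> v \<noteq> 0"
    and flat: "\<And>i r. i \<in> I - I0 \<Longrightarrow> r \<ge> 0 \<Longrightarrow> \<phi> i (c i + r * (w i \<bullet> v)) = \<phi> i (c i)"
  shows "\<exists>x. \<forall>z. ridge_sum \<phi> w I x \<le> ridge_sum \<phi> w I z"
proof -
  let ?J = "I - I0"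
  \<comment> \<open>large enough to move every \<open>w i \<bullet> x0\<close>, \<open>i \<in> ?J\<close>, onto the half-line where \<open>\<phi> i\<close> is minimal\<close>
  define s where "s = (\<Sum>i\<in>?J. \<bar>(c i - w i \<bullet> x0) / (w i \<bullet> v)\<bar>)"
  have at_min: "\<phi> i (w i \<bullet> (x0 + s *\<^sub>R v)) = \<phi> i (c i)" if i: "i \<in> ?J" for i
  proof -
    have "\<bar>(c i - w i \<bullet> x0) / (w i \<bullet> v)\<bar> \<le> s"
      unfolding s_def using assms(1) i by (intro member_le_sum) auto
    then have "(c i - w i \<bullet> x0) / (w i \<bullet> v) \<le> s" by linarith
    moreover have "w i \<bullet> (x0 + s *\<^sub>R v) = c i + (s - (c i - w i \<bullet> x0) / (w i \<bullet> v)) * (w i \<bullet> v)"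
      using nonorth[OF i] by (simp add: inner_add_right field_simps)
    ultimately show ?thesis using flat[OF i] by simp
  qed
  have "ridge_sum \<phi> w I (x0 + s *\<^sub>R v) \<le> ridge_sum \<phi> w I z" for z
  proof -
    have "ridge_sum \<phi> w I0 (x0 + s *\<^sub>R v) = ridge_sum \<phi> w I0 x0"
      unfolding ridge_sum_def using orth by (intro sum.cong) (auto simp: inner_add_right)
    moreover have "ridge_sum \<phi> w ?J (x0 + s *\<^sub>R v) = (\<Sum>i\<in>?J. \<phi> i (c i))"
      unfolding ridge_sum_def using at_min by simp
    ultimately have "ridge_sum \<phi> w I (x0 + s *\<^sub>R v) = ridge_sum \<phi> w I0 x0 + (\<Sum>i\<in>?J. \<phi> i (c i))"
      using ridge_sum_split[OF assms(1,2), of \<phi> w "x0 + s *\<^sub>R v"] by simp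
    also have "\<dots> \<le> ridge_sum \<phi> w I0 z + ridge_sum \<phi> w ?J z"
      using min0 ridge_sum_ge_sum_min[of ?J \<phi> c] min by (intro add_mono) auto
    also have "\<dots> = ridge_sum \<phi> w I z"
      using ridge_sum_split[OF assms(1,2), of \<phi> w z] by simp
    finally show ?thesis .
  qed
  then show ?thesis by blast
qed

lemma ridge_sum_attains_min_if_bounded_sublevel:
  fixes w :: "'i \<Rightarrow> 'a::euclidean_space"
  assumes "\<And>i. i \<in> I \<Longrightarrow> convex_on UNIV (\<phi> i)"
    and "bounded ({n. \<forall>i\<in>I. w i \<bullet> n = 0}\<^sup>\<bottom> \<inter> {x. ridge_sum \<phi> w I x \<le> ridge_sum \<phi> w I 0})"
  shows "\<exists>x. \<forall>z. ridge_sum \<phi> w I x \<le> ridge_sum \<phi> w I z"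
proof -
  let ?N = "{n. \<forall>i\<in>I. w i \<bullet> n = 0}"
  have "subspace ?N" unfolding subspace_def by (auto simp: inner_add_right)
  have "convex_on UNIV (ridge_sum \<phi> w I)" using assms(1) by (rule convex_on_ridge_sum)
  then have "continuous_on UNIV (ridge_sum \<phi> w I)" by (simp add: convex_on_continuous)
  moreover have "closed (?N\<^sup>\<bottom>)" "0 \<in> ?N\<^sup>\<bottom>"
    by (simp_all add: closed_subspace subspace_orthogonal_comp subspace_0)
  moreover have "\<exists>s\<in>?N\<^sup>\<bottom>. ridge_sum \<phi> w I s \<le> ridge_sum \<phi> w I x" for x
  proof -
    have "x \<in> ?N + ?N\<^sup>\<bottom>" using subspace_sum_orthogonal_comp[OF \<open>subspace ?N\<close>] by simp
    then obtain n s where "n \<in> ?N" "s \<in> ?N\<^sup>\<bottom>" "x = n + s" by (rule set_plus_elim)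
    then have "ridge_sum \<phi> w I s = ridge_sum \<phi> w I x" by (simp add: ridge_sum_def inner_add_right)
    with \<open>s \<in> ?N\<^sup>\<bottom>\<close> show ?thesis by (intro bexI[of _ s]) simp_all
  qed
  ultimately show ?thesis using assms(2) by (rule continuous_attains_inf_if_bounded_sublevel)
qed

lemma ridge_sum_unbounded_sublevel_ray:
  fixes w :: "'i \<Rightarrow> 'a::euclidean_space"
  assumes "\<And>i. i \<in> I \<Longrightarrow> convex_on UNIV (\<phi> i)"
    and "\<not> bounded ({n. \<forall>i\<in>I. w i \<bullet> n = 0}\<^sup>\<bottom> \<inter> {x. ridge_sum \<phi> w I x \<le> ridge_sum \<phi> w I 0})"
  obtains v where "v \<noteq> 0" "v \<in> {n. \<forall>i\<in>I. w i \<bullet> n = 0}\<^sup>\<bottom>"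
    and "\<And>t. t \<ge> 0 \<Longrightarrow> ridge_sum \<phi> w I (t *\<^sub>R v) \<le> ridge_sum \<phi> w I 0"
proof -
  let ?F = "ridge_sum \<phi> w I"
  let ?K = "{n. \<forall>i\<in>I. w i \<bullet> n = 0}\<^sup>\<bottom> \<inter> {x. ?F x \<le> ?F 0}"
  have "convex_on UNIV ?F" using assms(1) by (rule convex_on_ridge_sum)
  then have "convex ?K"
    using convex_sublevel[of UNIV ?F "?F 0"]
    by (simp add: convex_Int subspace_imp_convex subspace_orthogonal_comp)
  moreover have "closed ?K"
    using \<open>convex_on UNIV ?F\<close>
    by (intro closed_Int closed_subspace closed_Collect_le)
      (simp_all add: subspace_orthogonal_comp convex_on_continuous)
  moreover have "0 \<in> ?K" by (simp add: subspace_0 subspace_orthogonal_comp)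
  ultimately obtain v where v: "v \<noteq> 0" "\<And>t. t \<ge> 0 \<Longrightarrow> t *\<^sub>R v \<in> ?K"
    using unbounded_closed_convex_contains_ray[of ?K 0] assms(2) by auto
  show ?thesis
  proof (rule that)
    show "v \<in> {n. \<forall>i\<in>I. w i \<bullet> n = 0}\<^sup>\<bottom>" using v(2)[of 1] by simp
    show "?F (t *\<^sub>R v) \<le> ?F 0" if "t \<ge> 0" for t using v(2)[OF that] by simp
  qed (rule v(1))
qed

lemma ridge_sum_attains_min:
  fixes w :: "'i \<Rightarrow> 'a::euclidean_space"
  assumes "finite I" and "\<And>i. i \<in> I \<Longrightarrow> convex_on UNIV (\<phi> i)"
    and "\<And>i. i \<in> I \<Longrightarrow> \<exists>c. \<forall>s. \<phi> i c \<le> \<phi> i s"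
  shows "\<exists>x. \<forall>z. ridge_sum \<phi> w I x \<le> ridge_sum \<phi> w I z"
  using assms
proof (induction "card I" arbitrary: I rule: less_induct)
  case less
  let ?N = "{n. \<forall>i\<in>I. w i \<bullet> n = 0}"
  show ?case
  proof (cases "bounded (?N\<^sup>\<bottom> \<inter> {x. ridge_sum \<phi> w I x \<le> ridge_sum \<phi> w I 0})")
    case True
    with less.prems(2) show ?thesis by (rule ridge_sum_attains_min_if_bounded_sublevel)
  next
    case False
    obtain v where "v \<noteq> 0" "v \<in> ?N\<^sup>\<bottom>"
      and ray: "\<And>t. t \<ge> 0 \<Longrightarrow> ridge_sum \<phi> w I (t *\<^sub>R v) \<le> ridge_sum \<phi> w I 0"
      using ridge_sum_unbounded_sublevel_ray[of I \<phi> w, OF less.prems(2) False] by blast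
    obtain c where min: "\<And>i s. i \<in> I \<Longrightarrow> \<phi> i (c i) \<le> \<phi> i s" using less.prems(3) by metis
    define I0 where "I0 = {i \<in> I. w i \<bullet> v = 0}"
    have "I0 \<noteq> I"
    proof
      assume "I0 = I"
      then have "v \<in> ?N" by (auto simp: I0_def)
      then show False
        using \<open>v \<noteq> 0\<close> \<open>v \<in> ?N\<^sup>\<bottom>\<close> by (auto simp: orthogonal_comp_def orthogonal_def)
    qed
    then have "card I0 < card I"
      using less.prems(1) by (intro psubset_card_mono) (auto simp: I0_def)
    then obtain x0 where min0: "\<And>z. ridge_sum \<phi> w I0 x0 \<le> ridge_sum \<phi> w I0 z"
      using less.hyps[of I0] less.prems by (auto simp: I0_def)
    have flat: "\<phi> i (c i + r * (w i \<bullet> v)) = \<phi> i (c i)" if "i \<in> I" "r \<ge> 0" for i r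
      using ridge_term_constant_on_bounded_ray[of I i \<phi> c w v "ridge_sum \<phi> w I 0" r,
          OF less.prems(1) that(1) less.prems(2)[OF that(1)] min ray that(2)] .
    show ?thesis
      by (rule ridge_sum_minimizer_extend[OF less.prems(1) _ min0 min, of v])
        (use flat in \<open>auto simp: I0_def\<close>)
  qed
qed

lemma half_sq_norm_residual_eq_sum:
  fixes H :: "real^'d^'m" and y :: "real^'m"
  shows "(1/2) * (norm (H *v x - y))\<^sup>2 = (\<Sum>k\<in>UNIV. (H $ k \<bullet> x - y $ k)\<^sup>2 / 2)"
proof -
  have "(H *v x - y) $ k = H $ k \<bullet> x - y $ k" for k
    by (simp add: matrix_vector_mult_def inner_vec_def)
  then show ?thesis
    unfolding power2_norm_eq_inner inner_vec_def by (simp add: power2_eq_square sum_divide_distrib)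
qed

lemma convex_on_half_sq_shift: "convex_on UNIV (\<lambda>t::real. (t - c)\<^sup>2 / 2)"
  by (rule convex_on_realI[where f' = "\<lambda>t. t - c"]) (auto intro!: derivative_eq_intros)

theorem proposition1:
  fixes H :: "real^'d^'m" and y :: "real^'m"
    and p :: nat and w :: "nat \<Rightarrow> real^'d" and \<psi> :: "nat \<Rightarrow> real \<Rightarrow> real"
  assumes "\<And>i. i \<in> {1..p} \<Longrightarrow> convex_on UNIV (\<psi> i)"
    and "\<And>i. i \<in> {1..p} \<Longrightarrow> {t. \<forall>s. \<psi> i t \<le> \<psi> i s} \<noteq> {}"
  shows "{x. \<forall>z. (1/2) * (norm (H *v x - y))\<^sup>2 + (\<Sum>i=1..p. \<psi> i (w i \<bullet> x))
               \<le> (1/2) * (norm (H *v z - y))\<^sup>2 + (\<Sum>i=1..p. \<psi> i (w i \<bullet> z))} \<noteq> {}"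
proof -
  define \<phi> where "\<phi> = case_sum (\<lambda>k t. (t - y $ k)\<^sup>2 / 2) \<psi>"
  define u where "u = case_sum (\<lambda>k. H $ k) w"
  let ?I = "UNIV <+> {1..p}"
  have objective: "ridge_sum \<phi> u ?I x
      = (1/2) * (norm (H *v x - y))\<^sup>2 + (\<Sum>i=1..p. \<psi> i (w i \<bullet> x))" for x
    unfolding half_sq_norm_residual_eq_sum ridge_sum_def by (simp add: sum.Plus \<phi>_def u_def comp_def)
  have "\<exists>x. \<forall>z. ridge_sum \<phi> u ?I x \<le> ridge_sum \<phi> u ?I z"
  proof (rule ridge_sum_attains_min)
    show "convex_on UNIV (\<phi> j)" if "j \<in> ?I" for j
      using that assms(1) convex_on_half_sq_shift by (auto simp: \<phi>_def)
    show "\<exists>c. \<forall>s. \<phi> j c \<le> \<phi> j s" if "j \<in> ?I" for j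
    proof (cases j)
      case (Inl k)
      then show ?thesis by (auto simp: \<phi>_def intro!: exI[of _ "y $ k"])
    next
      case (Inr i)
      then show ?thesis using that assms(2)[of i] by (auto simp: \<phi>_def)
    qed
  qed simp
  then show ?thesis unfolding objective by blast
qed

end
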